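(* Let $\Omega$ be a finite subset of $\mathbb{Z}^d\setminus\{0\}$ invariant under all symmetries of $\mathbb{Z}^d$, let $\phi:\mathbb{Z}_{\ge 0}\to[0,\infty)$ satisfy $\phi(0)=\phi(1)=0$ and $\phi(a+b)\ge\phi(a)+\phi(b)$, and let $\rho$ be a probability mass function on $\Omega$ invariant under all symmetries of $\mathbb{Z}^d$. Then the series $H(\lambda)=\sum_{n=0}^\infty H_ne^{-\lambda n}$ converges for every $\lambda>\lambda_0$, and $\sum_{n=0}^\infty H_ne^{-\lambda_0 n}=\infty$.
   Context: A walk of length $n$ is a sequence $\gamma=(\gamma(i))_{i=0}^n$ in $\mathbb{Z}^d$ with $\gamma(i)-\gamma(i-1)\in\Omega$; $\mathrm{W}_n$ is the set of such walks with $\gamma(0)=0$. With $l_v(\gamma)=\#\{k:\gamma(k)=v\}$, set $\sigma(\gamma)=\prod_{v}e^{-\phi(l_v(\gamma))}\prod_{i=1}^n\rho(\gamma(i)-\gamma(i-1))$, $Z_n=\sum_{\gamma\in\mathrm{W}_n}\sigma(\gamma)$ and $\lambda_0=\lim_n\tfrac1n\log Z_n$ (which exists). $x(v)$ is the first coordinate of $v$. A bridge of length $n$ is $\gamma\in\mathrm{W}_n$ with $x(\gamma(0))<x(\gamma(i))\le x(\gamma(n))$ for $1\le i\le n$; $H_n$ is the sum of $\sigma$ over bridges of length $n$ (with $H_0=1$). *)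

theory Defs
  imports "HOL-Analysis.Analysis" "HOL-Library.Function_Algebras"
begin

text \<open>Points of Z^d are represented as functions nat => int vanishing at all indices >= d;
  the first coordinate x(v) is v 0.\<close>

type_synonym pt = "nat \<Rightarrow> int"

definition Zd :: "nat \<Rightarrow> pt set" where
  "Zd d = {v. \<forall>i\<ge>d. v i = 0}"

text \<open>Symmetries of Z^d fixing the origin: signed coordinate permutations.\<close>
definition lattice_syms :: "nat \<Rightarrow> (pt \<Rightarrow> pt) set" where
  "lattice_syms d = {g. \<exists>p s. p permutes {..<d} \<and> (\<forall>i. s i \<in> {-1, 1::int}) \<and>
      g = (\<lambda>v i. if i < d then s i * v (p i) else 0)}"

definition xcoord :: "pt \<Rightarrow> int" where
  "xcoord v = v 0"

definition walks :: "pt set \<Rightarrow> nat \<Rightarrow> pt list set" where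
  "walks \<Omega> n = {\<gamma>. length \<gamma> = Suc n \<and> \<gamma> ! 0 = 0 \<and>
      (\<forall>i\<in>{1..n}. \<gamma> ! i - \<gamma> ! (i - 1) \<in> \<Omega>)}"

definition local_time :: "pt list \<Rightarrow> pt \<Rightarrow> nat" where
  "local_time \<gamma> v = card {k. k < length \<gamma> \<and> \<gamma> ! k = v}"

definition weight :: "(nat \<Rightarrow> real) \<Rightarrow> (pt \<Rightarrow> real) \<Rightarrow> pt list \<Rightarrow> real" where
  "weight \<phi> \<rho> \<gamma> =
     (\<Prod>v\<in>set \<gamma>. exp (- \<phi> (local_time \<gamma> v))) *
     (\<Prod>i\<in>{1..<length \<gamma>}. \<rho> (\<gamma> ! i - \<gamma> ! (i - 1)))"

definition Zpart :: "pt set \<Rightarrow> (nat \<Rightarrow> real) \<Rightarrow> (pt \<Rightarrow> real) \<Rightarrow> nat \<Rightarrow> real" where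
  "Zpart \<Omega> \<phi> \<rho> n = (\<Sum>\<gamma>\<in>walks \<Omega> n. weight \<phi> \<rho> \<gamma>)"

definition lambda0 :: "pt set \<Rightarrow> (nat \<Rightarrow> real) \<Rightarrow> (pt \<Rightarrow> real) \<Rightarrow> real" where
  "lambda0 \<Omega> \<phi> \<rho> = lim (\<lambda>n. ln (Zpart \<Omega> \<phi> \<rho> n) / real n)"

definition is_bridge :: "pt list \<Rightarrow> bool" where
  "is_bridge \<gamma> = (\<forall>i\<in>{1..<length \<gamma>}.
      xcoord (\<gamma> ! 0) < xcoord (\<gamma> ! i) \<and> xcoord (\<gamma> ! i) \<le> xcoord (\<gamma> ! (length \<gamma> - 1)))"

definition Hbridge :: "pt set \<Rightarrow> (nat \<Rightarrow> real) \<Rightarrow> (pt \<Rightarrow> real) \<Rightarrow> nat \<Rightarrow> real" where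
  "Hbridge \<Omega> \<phi> \<rho> n = (if n = 0 then 1 else
      (\<Sum>\<gamma>\<in>{\<gamma>\<in>walks \<Omega> n. is_bridge \<gamma>}. weight \<phi> \<rho> \<gamma>))"

end

(*
  Concatenating two bridges gives a bridge whose pieces
  occupy disjoint slabs, so the weights multiply and H_n is supermultiplicative; by Fekete's
  lemma H_n <= exp (lambda_H n) with lambda_H = lim (log H_n) / n, which gives convergence for
  lambda > lambda_H.  Ignoring the visits at the endpoints makes the walk weights
  submultiplicative (phi is superadditive); these unpinned sums Z'_n dominate Z_n >= H_n, so
  Z'_n >= exp (lambda_H n).  By the Hammersley-Welsh argument walks are controlled by bridges: a
  half-space walk splits at its last highest point into a bridge and a reflected half-space walk
  of smaller height, so half-space walks have generating function at most
  prod_s (1 + B_s(z)) <= exp H(z); a general walk splits at its last leftmost point into two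
  half-space walks, once a step to the right is prepended to the reversed first piece.  Hence
  sum Z'_n z^n <= C (1 + z exp H(z)) exp H(z).  For z < exp (- lambda_H) this bounds Z_n and
  yields lambda_0 = lambda_H; at z = exp (- lambda_H) a finite H(z) would contradict
  Z'_n z^n >= 1.
*)

theory Submission
  imports Defs
begin

section \<open>Walks as step sequences\<close>

definition position :: "pt list \<Rightarrow> nat \<Rightarrow> pt" where
  "position us i = sum_list (take i us)"

definition height :: "pt list \<Rightarrow> nat \<Rightarrow> int" where
  "height us i = xcoord (position us i)"

definition visits :: "pt list \<Rightarrow> nat set \<Rightarrow> pt multiset" where
  "visits us A = image_mset (position us) (mset_set A)"

definition half_space_walk :: "pt list \<Rightarrow> bool" where
  "half_space_walk us \<longleftrightarrow> (\<forall>i\<in>{1..length us}. 0 < height us i)"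

definition bridge_walk :: "pt list \<Rightarrow> bool" where
  "bridge_walk us \<longleftrightarrow>
     half_space_walk us \<and> (\<forall>i\<le>length us. height us i \<le> height us (length us))"

definition max_height :: "pt list \<Rightarrow> nat" where
  "max_height us = nat (Max (height us ` {..length us}))"

definition min_height :: "pt list \<Rightarrow> int" where
  "min_height us = Min (height us ` {..length us})"

definition last_hit :: "pt list \<Rightarrow> int \<Rightarrow> nat" where
  "last_hit us h = Max {i. i \<le> length us \<and> height us i = h}"

definition reflect_x :: "pt \<Rightarrow> pt" where
  "reflect_x v = v(0 := - v 0)"

lemma position_0 [simp]: "position us 0 = 0"
  by (simp add: position_def)

lemma xcoord_0 [simp]: "xcoord 0 = 0"
  by (simp add: xcoord_def)

lemma height_0 [simp]: "height us 0 = 0"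
  by (simp add: height_def)

lemma position_Suc: "i < length us \<Longrightarrow> position us (Suc i) = position us i + us ! i"
  by (simp add: position_def take_Suc_conv_app_nth)

lemma position_Cons: "position (u # us) (Suc j) = u + position us j"
  by (simp add: position_def)

lemma position_take: "i \<le> k \<Longrightarrow> position (take k us) i = position us i"
  by (simp add: position_def min_def)

lemma position_drop: "position (drop k us) j = position us (k + j) - position us k"
  by (simp add: position_def take_add)

lemma position_append: "i \<le> length a \<Longrightarrow> position (a @ b) i = position a i"
  by (simp add: position_def)

lemma position_append_shift:
  "position (a @ b) (length a + j) = position a (length a) + position b j"
  by (simp add: position_def)

lemma position_map:
  assumes "\<And>x y. g (x + y) = g x + g y"
  shows "position (map g us) i = g (position us i)"
proof -
  have "g 0 = 0" using assms[of 0 0] by simp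
  then have "sum_list (map g xs) = g (sum_list xs)" for xs
    by (induction xs) (simp_all add: assms)
  then show ?thesis by (simp add: position_def take_map)
qed

lemma position_rev_uminus:
  assumes "j \<le> length us"
  shows "position (rev (map uminus us)) j = position us (length us - j) - position us (length us)"
proof -
  let ?k = "length us - j"
  have "sum_list (map uminus xs) = - sum_list xs" for xs :: "pt list"
    by (induction xs) simp_all
  then have "position (rev (map uminus us)) j = - sum_list (drop ?k us)"
    by (simp add: position_def take_rev drop_map)
  moreover have "position us (length us) = position us ?k + sum_list (drop ?k us)"
    by (metis position_def sum_list_append append_take_drop_id take_all order_refl)
  ultimately show ?thesis by simp
qed

lemma height_take: "i \<le> k \<Longrightarrow> height (take k us) i = height us i"
  by (simp add: height_def position_take)

lemma height_drop: "height (drop k us) j = height us (k + j) - height us k"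
  by (simp add: height_def xcoord_def position_drop)

lemma height_append: "i \<le> length a \<Longrightarrow> height (a @ b) i = height a i"
  by (simp add: height_def position_append)

lemma height_append_shift:
  "height (a @ b) (length a + j) = height a (length a) + height b j"
  by (simp add: height_def xcoord_def position_append_shift)

lemma reflect_x_add: "reflect_x (x + y) = reflect_x x + reflect_x y"
  by (simp add: reflect_x_def fun_eq_iff)

lemma reflect_x_reflect_x [simp]: "reflect_x (reflect_x v) = v"
  by (simp add: reflect_x_def)

lemma inj_reflect_x: "inj reflect_x"
  by (metis injI reflect_x_reflect_x)

lemma height_map_reflect_x: "height (map reflect_x us) i = - height us i"
  by (simp add: height_def xcoord_def position_map reflect_x_add) (simp add: reflect_x_def)

lemma visits_union:
  "finite A \<Longrightarrow> finite B \<Longrightarrow> A \<inter> B = {} \<Longrightarrow> visits us (A \<union> B) = visits us A + visits us B"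
  by (simp add: visits_def mset_set_Union)

lemma visits_mono: "A \<subseteq> B \<Longrightarrow> finite B \<Longrightarrow> visits us A \<subseteq># visits us B"
  by (simp add: visits_def image_mset_subseteq_mono subset_imp_msubset_mset_set)

lemma set_visits: "finite A \<Longrightarrow> set_mset (visits us A) = position us ` A"
  by (simp add: visits_def)

lemma visits_cong: "(\<And>i. i \<in> A \<Longrightarrow> position vs i = position us i) \<Longrightarrow> visits vs A = visits us A"
  unfolding visits_def by (cases "finite A") (auto intro!: image_mset_cong)

lemma visits_reindex:
  assumes "finite A" "inj_on \<sigma> A" "\<And>i. i \<in> A \<Longrightarrow> position vs (\<sigma> i) = T (position us i)"
  shows "visits vs (\<sigma> ` A) = image_mset T (visits us A)"
proof -
  have "visits vs (\<sigma> ` A) = image_mset (\<lambda>i. position vs (\<sigma> i)) (mset_set A)"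
    using assms by (simp add: visits_def image_mset_mset_set[symmetric] image_mset.compositionality o_def)
  also have "\<dots> = image_mset T (visits us A)"
    using assms by (auto intro!: image_mset_cong simp: visits_def image_mset.compositionality o_def)
  finally show ?thesis .
qed

lemma visits_take: "A \<subseteq> {..k} \<Longrightarrow> visits (take k us) A = visits us A"
  by (rule visits_cong) (auto simp: position_take)

lemma visits_shift:
  "finite A \<Longrightarrow> visits us (plus k ` A) = image_mset (plus (position us k)) (visits (drop k us) A)"
  by (rule visits_reindex) (auto simp: position_drop)

lemma visits_map:
  assumes "\<And>x y. g (x + y) = g x + g y"
  shows "visits (map g us) A = image_mset g (visits us A)"
proof -
  have "position (map g us) = g \<circ> position us" by (simp add: fun_eq_iff position_map[OF assms])
  then show ?thesis by (simp add: visits_def image_mset.compositionality)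
qed

lemma max_height:
  shows height_le_max_height: "\<And>i. i \<le> length us \<Longrightarrow> height us i \<le> int (max_height us)"
    and max_height_attained: "\<exists>i\<le>length us. height us i = int (max_height us)"
proof -
  let ?H = "height us ` {..length us}"
  have "0 \<le> Max ?H" by (rule Max_ge_iff[THEN iffD2]) (auto intro: bexI[of _ 0])
  then have m: "int (max_height us) = Max ?H" by (simp add: max_height_def)
  show "\<And>i. i \<le> length us \<Longrightarrow> height us i \<le> int (max_height us)"
    unfolding m by (rule Max_ge) auto
  have "Max ?H \<in> ?H" by (rule Max_in) auto
  then obtain i where "i \<in> {..length us}" "Max ?H = height us i" by (rule imageE)
  then show "\<exists>i\<le>length us. height us i = int (max_height us)" unfolding m by auto
qed

lemma max_height_leI: "(\<And>i. i \<le> length us \<Longrightarrow> height us i \<le> int s) \<Longrightarrow> max_height us \<le> s"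
  using max_height_attained[of us] by force

lemma max_height_eqI:
  "(\<And>i. i \<le> length us \<Longrightarrow> height us i \<le> int s) \<Longrightarrow> j \<le> length us \<Longrightarrow> height us j = int s
   \<Longrightarrow> max_height us = s"
  using height_le_max_height[of j us] max_height_leI[of us s] by force

lemma min_height:
  shows min_height_le: "\<And>i. i \<le> length us \<Longrightarrow> min_height us \<le> height us i"
    and min_height_attained: "\<exists>i\<le>length us. height us i = min_height us"
proof -
  let ?H = "height us ` {..length us}"
  show "\<And>i. i \<le> length us \<Longrightarrow> min_height us \<le> height us i"
    unfolding min_height_def by (rule Min_le) auto
  have "Min ?H \<in> ?H" by (rule Min_in) auto
  then obtain i where "i \<in> {..length us}" "Min ?H = height us i" by (rule imageE)
  then show "\<exists>i\<le>length us. height us i = min_height us" unfolding min_height_def by auto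
qed

lemma last_hit:
  assumes "i \<le> length us" "height us i = h"
  shows last_hit_le_length: "last_hit us h \<le> length us"
    and height_last_hit: "height us (last_hit us h) = h"
    and height_after_last_hit: "\<And>j. last_hit us h < j \<Longrightarrow> j \<le> length us \<Longrightarrow> height us j \<noteq> h"
proof -
  let ?I = "{i. i \<le> length us \<and> height us i = h}"
  have fin: "finite ?I" by (rule finite_subset[of _ "{..length us}"]) auto
  have "last_hit us h \<in> ?I"
    unfolding last_hit_def using fin assms by (intro Max_in) auto
  then show "last_hit us h \<le> length us" "height us (last_hit us h) = h" by auto
  show "height us j \<noteq> h" if "last_hit us h < j" "j \<le> length us" for j
  proof
    assume "height us j = h"
    then have "j \<le> last_hit us h" unfolding last_hit_def using that by (intro Max_ge[OF fin]) auto
    then show False using that by simp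
  qed
qed

lemma half_space_walk_height_nonneg: "half_space_walk us \<Longrightarrow> i \<le> length us \<Longrightarrow> 0 \<le> height us i"
  unfolding half_space_walk_def by (cases "i = 0") (auto simp: less_imp_le)

lemma half_space_walk_butlast: "half_space_walk us \<Longrightarrow> half_space_walk (butlast us)"
  unfolding half_space_walk_def by (auto simp: butlast_conv_take height_take)

lemma bridge_walk_append:
  assumes a: "bridge_walk a" and b: "bridge_walk b"
  shows "bridge_walk (a @ b)"
proof -
  let ?n = "length a" and ?m = "length b"
  have ha: "half_space_walk a" and hb: "half_space_walk b" using a b by (auto simp: bridge_walk_def)
  have end_a: "0 \<le> height a ?n" and end_b: "0 \<le> height b ?m"
    using half_space_walk_height_nonneg ha hb by auto
  have cases_at_n: "P i" if "i \<le> ?n \<Longrightarrow> P i" "\<And>j. i = ?n + j \<Longrightarrow> j \<le> ?m \<Longrightarrow> P i"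
    "i \<le> ?n + ?m" for P i
    using that by (metis le_add_diff_inverse le_diff_conv nat_le_linear add.commute)
  have "0 < height (a @ b) i" if i: "i \<in> {1..?n + ?m}" for i
  proof (rule cases_at_n[where i = i])
    assume "i \<le> ?n" then show ?thesis using i ha by (auto simp: half_space_walk_def height_append)
  next
    fix j assume j: "i = ?n + j" "j \<le> ?m"
    show ?thesis
    proof (cases "j = 0")
      case True then show ?thesis using i ha j by (auto simp: half_space_walk_def height_append)
    next
      case False
      then have "0 < height b j" using hb j by (auto simp: half_space_walk_def)
      then show ?thesis using j end_a by (simp add: height_append_shift)
    qed
  qed (use i in auto)
  moreover have "height (a @ b) i \<le> height (a @ b) (?n + ?m)" if i: "i \<le> ?n + ?m" for i
  proof (rule cases_at_n[where i = i])
    assume "i \<le> ?n" then show ?thesis using a end_b height_append_shift[of a b ?m]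
      by (auto simp: bridge_walk_def height_append)
  next
    fix j assume "i = ?n + j" "j \<le> ?m"
    then show ?thesis using b height_append_shift[of a b ?m] height_append_shift[of a b j]
      by (auto simp: bridge_walk_def)
  qed (use i in auto)
  ultimately show ?thesis by (simp add: bridge_walk_def half_space_walk_def)
qed

definition walk_of_steps :: "pt list \<Rightarrow> pt list" where
  "walk_of_steps us = map (position us) [0..<Suc (length us)]"

lemma length_walk_of_steps [simp]: "length (walk_of_steps us) = Suc (length us)"
  by (simp add: walk_of_steps_def)

lemma nth_walk_of_steps: "i \<le> length us \<Longrightarrow> walk_of_steps us ! i = position us i"
  by (simp add: walk_of_steps_def nth_map_upt less_Suc_eq_le del: upt_Suc)

lemma walk_of_steps_step: "i < length us \<Longrightarrow> walk_of_steps us ! Suc i - walk_of_steps us ! i = us ! i"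
  by (simp add: nth_walk_of_steps position_Suc)

lemma inj_walk_of_steps: "inj walk_of_steps"
proof (rule injI)
  fix xs ys assume eq: "walk_of_steps xs = walk_of_steps ys"
  then have len: "length xs = length ys" by (metis length_walk_of_steps nat.inject)
  show "xs = ys"
  proof (rule nth_equalityI[OF len])
    fix i assume "i < length xs"
    then show "xs ! i = ys ! i" using eq len by (metis walk_of_steps_step)
  qed
qed

lemma is_bridge_walk_of_steps: "is_bridge (walk_of_steps us) \<longleftrightarrow> bridge_walk us"
proof -
  let ?n = "length us"
  have "is_bridge (walk_of_steps us)
      \<longleftrightarrow> (\<forall>i\<in>{1..?n}. 0 < height us i \<and> height us i \<le> height us ?n)"
    by (auto simp: is_bridge_def nth_walk_of_steps height_def atLeastLessThanSuc_atLeastAtMost)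
  also have "\<dots> \<longleftrightarrow> bridge_walk us"
  proof
    assume h: "\<forall>i\<in>{1..?n}. 0 < height us i \<and> height us i \<le> height us ?n"
    have "height us i \<le> height us ?n" if "i \<le> ?n" for i
    proof (cases "i = 0")
      case True then show ?thesis using h by (cases ?n) (auto simp: less_imp_le)
    next
      case False then show ?thesis using h that by auto
    qed
    then show "bridge_walk us" using h by (simp add: bridge_walk_def half_space_walk_def)
  qed (simp add: bridge_walk_def half_space_walk_def)
  finally show ?thesis .
qed

lemma half_space_split_last_max:
  assumes hs: "half_space_walk us" and s1: "1 \<le> max_height us"
  defines "k \<equiv> last_hit us (int (max_height us))"
  shows "k \<le> length us" and "bridge_walk (take k us)" and "max_height (take k us) = max_height us"
    and "half_space_walk (map reflect_x (drop k us))"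
    and "max_height (map reflect_x (drop k us)) < max_height us"
proof -
  let ?n = "length us" and ?s = "max_height us" and ?r = "map reflect_x (drop k us)"
  obtain i where "i \<le> ?n" "height us i = int ?s" using max_height_attained by blast
  note hit = last_hit[OF this, folded k_def]
  show kn: "k \<le> ?n" by (rule hit(1))
  have at_k: "height us k = int ?s" by (rule hit(2))
  have below: "height us i \<le> int ?s" if "i \<le> ?n" for i by (rule height_le_max_height[OF that])
  have strictly_below: "height us i < int ?s" if "k < i" "i \<le> ?n" for i
    using hit(3)[OF that] below[OF that(2)] by simp
  have pos: "0 < height us i" if "1 \<le> i" "i \<le> ?n" for i
    using hs that by (auto simp: half_space_walk_def)
  have k1: "1 \<le> k" using at_k s1 by (cases k) auto
  have len_take: "length (take k us) = k" using kn by simp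
  have height_b: "height (take k us) i = height us i" if "i \<le> k" for i
    using that by (simp add: height_take)
  show "bridge_walk (take k us)"
    unfolding bridge_walk_def half_space_walk_def len_take using height_b pos below kn at_k by auto
  show "max_height (take k us) = ?s"
    by (rule max_height_eqI[where j = k]) (use height_b below kn at_k len_take in auto)
  have height_r: "height ?r j = int ?s - height us (k + j)" for j
    by (simp add: height_map_reflect_x height_drop at_k)
  show "half_space_walk ?r"
    unfolding half_space_walk_def using strictly_below height_r by auto
  have "max_height ?r \<le> ?s - 1"
  proof (rule max_height_leI)
    fix j assume j: "j \<le> length ?r"
    show "height ?r j \<le> int (?s - 1)"
    proof (cases "j = 0")
      case True then show ?thesis using s1 by simp
    next
      case False then show ?thesis using pos[of "k + j"] height_r[of j] j k1 s1 by auto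
    qed
  qed
  then show "max_height ?r < ?s" using s1 by simp
qed

text \<open>The reversed initial segment up to the last minimum only stays weakly to the right of its
  start; prepending a step \<open>u\<close> with \<open>0 < xcoord u\<close> makes it a half-space walk.\<close>

lemma half_space_split_last_min:
  fixes u :: pt and c :: "pt list"
  assumes u: "0 < xcoord u"
  defines "k \<equiv> last_hit c (min_height c)"
  shows "k \<le> length c" and "half_space_walk (u # rev (map uminus (take k c)))"
    and "half_space_walk (drop k c)"
proof -
  let ?a = "u # rev (map uminus (take k c))"
  obtain i where "i \<le> length c" "height c i = min_height c" using min_height_attained by blast
  note hit = last_hit[OF this, folded k_def]
  show kn: "k \<le> length c" by (rule hit(1))
  have at_k: "height c k = min_height c" by (rule hit(2))
  have height_a: "height ?a (Suc j) = xcoord u + height c (k - j) - height c k" if "j \<le> k" for j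
    using that kn by (simp add: height_def xcoord_def position_Cons position_rev_uminus position_take)
  show "half_space_walk ?a" unfolding half_space_walk_def
  proof
    fix i assume "i \<in> {1..length ?a}"
    then obtain j where "i = Suc j" "j \<le> k" using kn by (cases i) auto
    moreover have "min_height c \<le> height c (k - j)" using kn by (intro min_height_le) simp
    ultimately show "0 < height ?a i" using height_a at_k u by simp
  qed
  show "half_space_walk (drop k c)" unfolding half_space_walk_def
  proof
    fix j assume "j \<in> {1..length (drop k c)}"
    then have "k < k + j" "k + j \<le> length c" by auto
    then show "0 < height (drop k c) j"
      using hit(3) min_height_le[of "k + j" c] at_k by (fastforce simp: height_drop)
  qed
qed

lemma inj_Cons_rev_map_uminus: "inj (\<lambda>xs. u # rev (map uminus xs :: 'a::group_add list))"
proof (rule injI)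
  fix xs ys :: "'a list"
  assume "u # rev (map uminus xs) = u # rev (map uminus ys)"
  then have "map uminus xs = map uminus ys" by simp
  then show "xs = ys" by (rule map_injective) (rule inj_uminus)
qed

lemma inj_on_split:
  assumes "inj f" "inj g"
  shows "inj_on (\<lambda>us. (f (take (k us) us), g (drop (k us) us))) A"
proof (rule inj_onI)
  fix x y
  assume "(f (take (k x) x), g (drop (k x) x)) = (f (take (k y) y), g (drop (k y) y))"
  then have "take (k x) x = take (k y) y" "drop (k x) x = drop (k y) y"
    using assms by (auto dest: injD)
  then show "x = y" by (metis append_take_drop_id)
qed

lemma sum_le_sum_mult_sum_inj:
  fixes f :: "'a \<Rightarrow> real" and g :: "'b \<Rightarrow> real" and h :: "'c \<Rightarrow> real"
  assumes "finite B" "finite C" "inj_on F A" "F ` A \<subseteq> B \<times> C"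
    and "\<And>a. a \<in> A \<Longrightarrow> f a \<le> g (fst (F a)) * h (snd (F a))"
    and "\<And>b. b \<in> B \<Longrightarrow> 0 \<le> g b" "\<And>c. c \<in> C \<Longrightarrow> 0 \<le> h c"
  shows "sum f A \<le> sum g B * sum h C"
proof -
  let ?gh = "\<lambda>p. g (fst p) * h (snd p)"
  have "finite A"
    using assms(1-4) finite_subset[of "F ` A" "B \<times> C"] finite_imageD by blast
  then have "sum f A \<le> sum (?gh \<circ> F) A" by (intro sum_mono) (simp add: assms(5))
  also have "\<dots> = sum ?gh (F ` A)" using assms(3) by (simp add: sum.reindex)
  also have "\<dots> \<le> sum ?gh (B \<times> C)"
    by (rule sum_mono2) (use assms(1,2,4,6,7) in \<open>auto intro!: mult_nonneg_nonneg\<close>)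
  also have "\<dots> = sum g B * sum h C"
    by (simp add: sum_product sum.cartesian_product case_prod_beta)
  finally show ?thesis .
qed

section \<open>Fekete's lemma\<close>

lemma superadditive_mult_le:
  fixes a :: "nat \<Rightarrow> real"
  assumes "\<And>n m. a n + a m \<le> a (n + m)" "a 0 = 0"
  shows "real q * a k \<le> a (q * k)"
proof (induction q)
  case (Suc q)
  have "real (Suc q) * a k \<le> a (q * k) + a k" using Suc by (simp add: algebra_simps)
  also have "\<dots> \<le> a (Suc q * k)" using assms(1)[of "q * k" k] by (simp add: add.commute)
  finally show ?case .
qed (simp add: assms(2))

lemma superadditive_ratio_lower_bound:
  fixes a :: "nat \<Rightarrow> real"
  assumes superadd: "\<And>n m. a n + a m \<le> a (n + m)" and a0: "a 0 = 0" and nonpos: "\<And>n. a n \<le> 0"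
    and k: "1 \<le> k" and n: "1 \<le> n" and m: "\<And>r. r < k \<Longrightarrow> m \<le> a r"
  shows "a k / real k + m / real n \<le> a n / real n"
proof -
  define q where "q = n div k"
  define r where "r = n mod k"
  have "a (q * k) + a r \<le> a n" using superadd[of "q * k" r] by (simp add: q_def r_def)
  moreover have "real q * a k \<le> a (q * k)" by (rule superadditive_mult_le[OF superadd a0])
  moreover have "(real n / real k) * a k \<le> real q * a k"
    using mult_right_mono_neg[OF of_nat_div_le_of_nat[of n k] nonpos[of k]] by (simp add: q_def)
  moreover have "m \<le> a r" using m k by (simp add: r_def)
  ultimately have "(real n / real k) * a k + m \<le> a n" by linarith
  then have "((real n / real k) * a k + m) / real n \<le> a n / real n"
    using n by (simp add: divide_right_mono)
  then show ?thesis using n by (simp add: field_simps)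
qed

lemma fekete_superadditive:
  fixes a :: "nat \<Rightarrow> real"
  assumes superadd: "\<And>n m. a n + a m \<le> a (n + m)" and a0: "a 0 = 0" and nonpos: "\<And>n. a n \<le> 0"
  defines "L \<equiv> SUP n\<in>{1..}. a n / real n"
  shows "(\<lambda>n. a n / real n) \<longlonglongrightarrow> L" and "\<And>n. 1 \<le> n \<Longrightarrow> a n / real n \<le> L"
proof -
  have bdd: "bdd_above ((\<lambda>n. a n / real n) ` {1..})"
    by (rule bdd_aboveI[of _ 0]) (auto simp: divide_nonpos_nonneg nonpos)
  show upper: "\<And>n. 1 \<le> n \<Longrightarrow> a n / real n \<le> L"
    unfolding L_def by (rule cSUP_upper[OF _ bdd]) auto
  show "(\<lambda>n. a n / real n) \<longlonglongrightarrow> L"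
  proof (rule order_tendstoI)
    fix b assume "L < b"
    from eventually_ge_at_top[of 1] show "\<forall>\<^sub>F n in sequentially. a n / real n < b"
    proof eventually_elim
      case (elim n)
      then show ?case using upper[of n] \<open>L < b\<close> by linarith
    qed
  next
    fix b assume "b < L"
    define e where "e = (L - b) / 2"
    have e: "0 < e" "b + 2 * e = L" using \<open>b < L\<close> by (simp_all add: e_def field_simps)
    then have "L - e < (SUP n\<in>{1..}. a n / real n)" unfolding L_def by simp
    then obtain k where k: "1 \<le> k" "L - e < a k / real k"
      by (subst (asm) less_cSUP_iff[OF _ bdd]) auto
    define m where "m = Min (a ` {..<k})"
    have m_le: "m \<le> a r" if "r < k" for r unfolding m_def using that by (intro Min_le) auto
    have "(\<lambda>n. m / real n) \<longlonglongrightarrow> 0" by (rule lim_const_over_n)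
    then have "\<forall>\<^sub>F n in sequentially. - e < m / real n"
      by (rule order_tendstoD) (use e in simp)
    then show "\<forall>\<^sub>F n in sequentially. b < a n / real n"
      using eventually_ge_at_top[of 1]
    proof eventually_elim
      case (elim n)
      have "a k / real k + m / real n \<le> a n / real n"
        by (rule superadditive_ratio_lower_bound[OF superadd a0 nonpos k(1) elim(2) m_le])
      then show ?case using elim(1) k(2) e(2) by linarith
    qed
  qed
qed

section \<open>Self-interaction weights\<close>

lemma count_image_mset_inj: "inj f \<Longrightarrow> count (image_mset f M) (f x) = count M x"
proof -
  assume "inj f"
  then have "f -` {f x} = {x}" by (auto simp: inj_def)
  then show ?thesis by (cases "x \<in># M") (auto simp: count_image_mset not_in_iff)
qed

locale penalty =
  fixes \<phi> :: "nat \<Rightarrow> real"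
  assumes phi_nonneg: "\<And>a. 0 \<le> \<phi> a" and phi_0: "\<phi> 0 = 0" and phi_1: "\<phi> 1 = 0"
    and phi_superadditive: "\<And>a b. \<phi> a + \<phi> b \<le> \<phi> (a + b)"
begin

lemma phi_mono: "a \<le> b \<Longrightarrow> \<phi> a \<le> \<phi> b"
  using phi_superadditive[of a "b - a"] phi_nonneg[of "b - a"] by simp

definition visit_weight :: "pt multiset \<Rightarrow> real" where
  "visit_weight M = (\<Prod>v\<in>set_mset M. exp (- \<phi> (count M v)))"

lemma visit_weight_on:
  "finite U \<Longrightarrow> set_mset M \<subseteq> U \<Longrightarrow> visit_weight M = (\<Prod>v\<in>U. exp (- \<phi> (count M v)))"
  unfolding visit_weight_def by (rule prod.mono_neutral_left) (auto simp: phi_0 not_in_iff)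

lemma visit_weight_pos: "0 < visit_weight M"
  by (simp add: visit_weight_def prod_pos)

lemma visit_weight_le_1: "visit_weight M \<le> 1"
  unfolding visit_weight_def by (rule prod_le_1) (use phi_nonneg in auto)

lemma visit_weight_empty [simp]: "visit_weight {#} = 1"
  by (simp add: visit_weight_def)

lemma visit_weight_add_le: "visit_weight (M + N) \<le> visit_weight M * visit_weight N"
proof -
  let ?U = "set_mset M \<union> set_mset N"
  have "visit_weight (M + N) = (\<Prod>v\<in>?U. exp (- \<phi> (count M v + count N v)))"
    by (simp add: visit_weight_def)
  also have "\<dots> \<le> (\<Prod>v\<in>?U. exp (- \<phi> (count M v)) * exp (- \<phi> (count N v)))"
  proof (rule prod_mono)
    fix v show "0 \<le> exp (- \<phi> (count M v + count N v)) \<and>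
      exp (- \<phi> (count M v + count N v)) \<le> exp (- \<phi> (count M v)) * exp (- \<phi> (count N v))"
      using phi_superadditive[of "count M v" "count N v"] by (simp add: exp_add[symmetric])
  qed
  also have "\<dots> = visit_weight M * visit_weight N"
    by (simp add: prod.distrib visit_weight_on[of ?U M] visit_weight_on[of ?U N])
  finally show ?thesis .
qed

lemma visit_weight_add_disjoint:
  assumes "set_mset M \<inter> set_mset N = {}"
  shows "visit_weight (M + N) = visit_weight M * visit_weight N"
proof -
  let ?U = "set_mset M \<union> set_mset N"
  have "visit_weight (M + N) = (\<Prod>v\<in>?U. exp (- \<phi> (count M v + count N v)))"
    by (simp add: visit_weight_def)
  also have "\<dots> = (\<Prod>v\<in>?U. exp (- \<phi> (count M v)) * exp (- \<phi> (count N v)))"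
  proof (rule prod.cong)
    fix v assume "v \<in> ?U"
    then have "count M v = 0 \<or> count N v = 0" using assms by (auto simp: count_eq_zero_iff)
    then show "exp (- \<phi> (count M v + count N v)) = exp (- \<phi> (count M v)) * exp (- \<phi> (count N v))"
      by (auto simp: phi_0)
  qed simp
  also have "\<dots> = visit_weight M * visit_weight N"
    by (simp add: prod.distrib visit_weight_on[of ?U M] visit_weight_on[of ?U N])
  finally show ?thesis .
qed

lemma visit_weight_antimono:
  assumes "M \<subseteq># N"
  shows "visit_weight N \<le> visit_weight M"
proof -
  have "visit_weight N \<le> (\<Prod>v\<in>set_mset N. exp (- \<phi> (count M v)))"
    unfolding visit_weight_def
    by (rule prod_mono) (use phi_mono assms in \<open>simp add: subseteq_mset_def\<close>)
  also have "\<dots> = visit_weight M"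
    using visit_weight_on[of "set_mset N" M] assms by (simp add: set_mset_mono)
  finally show ?thesis .
qed

lemma visit_weight_image: "inj f \<Longrightarrow> visit_weight (image_mset f M) = visit_weight M"
  by (simp add: visit_weight_def prod.reindex inj_on_subset[of f UNIV] count_image_mset_inj)

lemma visit_weight_add_mset_new: "v \<notin># M \<Longrightarrow> visit_weight (add_mset v M) = visit_weight M"
  using visit_weight_add_disjoint[of "{#v#}" M] by (simp add: visit_weight_def phi_1[unfolded One_nat_def])

lemma visit_weight_shift:
  "finite A \<Longrightarrow> visit_weight (visits us (plus k ` A)) = visit_weight (visits (drop k us) A)"
  by (simp add: visits_shift visit_weight_image)

lemma visit_weight_split:
  assumes "finite A" "finite B" "A \<inter> plus k ` B = {}"
  shows "visit_weight (visits us (A \<union> plus k ` B))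
    \<le> visit_weight (visits us A) * visit_weight (visits (drop k us) B)"
  using visit_weight_add_le[of "visits us A" "visits us (plus k ` B)"] assms
  by (simp add: visits_union visit_weight_shift)

end

section \<open>Weighted walks\<close>

locale weighted_walks = penalty \<phi> for \<phi> :: "nat \<Rightarrow> real" +
  fixes d :: nat and \<Omega> :: "pt set" and \<rho> :: "pt \<Rightarrow> real"
  assumes finite_steps: "finite \<Omega>" and steps_nonzero: "\<Omega> \<subseteq> Zd d - {0}"
    and steps_symmetric: "\<forall>g\<in>lattice_syms d. g ` \<Omega> \<subseteq> \<Omega>"
    and rho_nonneg: "\<forall>v\<in>\<Omega>. 0 \<le> \<rho> v" and rho_sum: "(\<Sum>v\<in>\<Omega>. \<rho> v) = 1"
    and rho_symmetric: "\<forall>g\<in>lattice_syms d. \<forall>v\<in>\<Omega>. \<rho> (g v) = \<rho> v"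
begin

lemma dim_pos: "0 < d"
proof (rule ccontr)
  assume "\<not> 0 < d"
  then have "Zd d = {0}" by (auto simp: Zd_def fun_eq_iff)
  then show False using steps_nonzero rho_sum by auto
qed

lemma lattice_sym_step:
  assumes "p permutes {..<d}" "\<forall>i. s i \<in> {-1, 1::int}" "v \<in> \<Omega>"
  defines "g \<equiv> \<lambda>v i. if i < d then s i * v (p i) else 0"
  shows "g v \<in> \<Omega>" and "\<rho> (g v) = \<rho> v"
proof -
  have "g \<in> lattice_syms d" unfolding lattice_syms_def g_def using assms(1,2) by blast
  then show "g v \<in> \<Omega>" "\<rho> (g v) = \<rho> v" using steps_symmetric rho_symmetric assms(3) by auto
qed

lemma reflect_x_step:
  assumes "v \<in> \<Omega>"
  shows "reflect_x v \<in> \<Omega>" and "\<rho> (reflect_x v) = \<rho> v"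
proof -
  define s :: "nat \<Rightarrow> int" where "s i = (if i = 0 then -1 else 1)" for i
  have "(\<lambda>i. if i < d then s i * v (id i) else 0) = reflect_x v"
    using assms steps_nonzero dim_pos by (auto simp: fun_eq_iff s_def reflect_x_def Zd_def)
  moreover have "\<forall>i. s i \<in> {-1, 1::int}" by (simp add: s_def)
  ultimately show "reflect_x v \<in> \<Omega>" "\<rho> (reflect_x v) = \<rho> v"
    using lattice_sym_step[OF permutes_id _ assms] by metis+
qed

lemma uminus_step:
  assumes "v \<in> \<Omega>"
  shows "- v \<in> \<Omega>" and "\<rho> (- v) = \<rho> v"
proof -
  have "(\<lambda>i. if i < d then - 1 * v (id i) else 0) = - v"
    using assms steps_nonzero by (auto simp: fun_eq_iff Zd_def)
  then show "- v \<in> \<Omega>" "\<rho> (- v) = \<rho> v"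
    using lattice_sym_step[OF permutes_id _ assms, of "\<lambda>_. - 1"] by auto
qed

lemma positive_step: "\<exists>u\<in>\<Omega>. 0 < xcoord u \<and> 0 < \<rho> u"
proof -
  obtain v where v: "v \<in> \<Omega>" "0 < \<rho> v"
  proof (rule ccontr)
    assume "\<not> thesis"
    then have "(\<Sum>v\<in>\<Omega>. \<rho> v) \<le> 0" using that by (force intro: sum_nonpos)
    then show False using rho_sum by simp
  qed
  then have vz: "v \<in> Zd d" "v \<noteq> 0" using steps_nonzero by auto
  obtain i where "v i \<noteq> 0" using vz(2) by (auto simp: fun_eq_iff)
  moreover from this have "i < d" using vz(1) by (auto simp: Zd_def not_less[symmetric])
  ultimately have i: "v i \<noteq> 0" "i < d" .
  define p where "p = Transposition.transpose 0 i"
  define s :: "nat \<Rightarrow> int" where "s j = (if j = 0 then sgn (v i) else 1)" for j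
  have "p permutes {..<d}" unfolding p_def using i dim_pos by (intro permutes_swap_id) auto
  moreover have "\<forall>j. s j \<in> {-1, 1::int}" using i by (auto simp: s_def sgn_if)
  ultimately have "(\<lambda>j. if j < d then s j * v (p j) else 0) \<in> \<Omega>"
    "\<rho> (\<lambda>j. if j < d then s j * v (p j) else 0) = \<rho> v"
    using lattice_sym_step[OF _ _ v(1)] by blast+
  moreover have "xcoord (\<lambda>j. if j < d then s j * v (p j) else 0) = \<bar>v i\<bar>"
    using dim_pos by (simp add: xcoord_def s_def p_def abs_sgn)
  ultimately show ?thesis using v i by (metis zero_less_abs_iff)
qed

definition step_weight :: "pt list \<Rightarrow> real" where
  "step_weight us = prod_list (map \<rho> us)"

text \<open>Variants of the walk weight that ignore the visits at the start, or at both ends: these are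
  submultiplicative under concatenation, and \<open>weight_tail\<close> agrees with \<open>weight_all\<close> on
  half-space walks, which never return to their start.\<close>

definition weight_all :: "pt list \<Rightarrow> real" where
  "weight_all us = visit_weight (visits us {0..length us}) * step_weight us"

definition weight_tail :: "pt list \<Rightarrow> real" where
  "weight_tail us = visit_weight (visits us {1..length us}) * step_weight us"

definition weight_inner :: "pt list \<Rightarrow> real" where
  "weight_inner us = visit_weight (visits us {1..<length us}) * step_weight us"

definition step_lists :: "nat \<Rightarrow> pt list set" where
  "step_lists n = {us. set us \<subseteq> \<Omega> \<and> length us = n}"

definition step_lists_upto :: "nat \<Rightarrow> pt list set" where
  "step_lists_upto M = {us. set us \<subseteq> \<Omega> \<and> length us \<le> M}"

lemma mem_step_lists: "us \<in> step_lists n \<longleftrightarrow> set us \<subseteq> \<Omega> \<and> length us = n"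
  by (simp add: step_lists_def)

lemma mem_step_lists_upto: "us \<in> step_lists_upto M \<longleftrightarrow> set us \<subseteq> \<Omega> \<and> length us \<le> M"
  by (simp add: step_lists_upto_def)

lemma finite_step_lists: "finite (step_lists n)"
  unfolding step_lists_def by (rule finite_lists_length_eq[OF finite_steps])

lemma finite_step_lists_upto: "finite (step_lists_upto M)"
  unfolding step_lists_upto_def by (rule finite_lists_length_le[OF finite_steps])

lemma finite_step_lists_filter [simp]: "finite {us. set us \<subseteq> \<Omega> \<and> length us = n \<and> P us}"
  by (rule finite_subset[OF _ finite_step_lists[of n]]) (auto simp: step_lists_def)

lemma finite_step_lists_upto_filter [simp]: "finite {us. set us \<subseteq> \<Omega> \<and> length us \<le> M \<and> P us}"
  by (rule finite_subset[OF _ finite_step_lists_upto[of M]]) (auto simp: step_lists_upto_def)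

lemma finite_step_lists_upto_Collect [simp]: "finite {us\<in>step_lists_upto M. P us}"
  by (simp add: finite_step_lists_upto)

lemma step_weight_append: "step_weight (a @ b) = step_weight a * step_weight b"
  by (simp add: step_weight_def)

lemma step_weight_nonneg: "set us \<subseteq> \<Omega> \<Longrightarrow> 0 \<le> step_weight us"
  unfolding step_weight_def by (induction us) (use rho_nonneg in auto)

lemma step_weight_map:
  "set us \<subseteq> \<Omega> \<Longrightarrow> (\<And>v. v \<in> \<Omega> \<Longrightarrow> \<rho> (g v) = \<rho> v) \<Longrightarrow> step_weight (map g us) = step_weight us"
  unfolding step_weight_def by (induction us) auto

lemma sum_step_weight: "(\<Sum>us\<in>step_lists n. step_weight us) = 1"
proof (induction n)
  case 0
  have "step_lists 0 = {[]}" by (auto simp: step_lists_def)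
  then show ?case by (simp add: step_weight_def)
next
  case (Suc n)
  have "(\<Sum>us\<in>step_lists (Suc n). step_weight us) = (\<Sum>(us, v)\<in>step_lists n \<times> \<Omega>. step_weight (v # us))"
    unfolding step_lists_def lists_length_Suc_eq by (subst sum.reindex[OF inj_split_Cons]) (simp add: case_prod_beta')
  also have "\<dots> = (\<Sum>us\<in>step_lists n. \<Sum>v\<in>\<Omega>. step_weight us * \<rho> v)"
    by (simp add: sum.cartesian_product step_weight_def mult.commute)
  also have "\<dots> = (\<Sum>us\<in>step_lists n. step_weight us) * (\<Sum>v\<in>\<Omega>. \<rho> v)"
    by (simp add: sum_product)
  finally show ?case using Suc rho_sum by simp
qed

lemma weight_all_nonneg: "set us \<subseteq> \<Omega> \<Longrightarrow> 0 \<le> weight_all us"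
  by (simp add: weight_all_def step_weight_nonneg visit_weight_pos less_imp_le)

lemma weight_tail_nonneg: "set us \<subseteq> \<Omega> \<Longrightarrow> 0 \<le> weight_tail us"
  by (simp add: weight_tail_def step_weight_nonneg visit_weight_pos less_imp_le)

lemma weight_inner_nonneg: "set us \<subseteq> \<Omega> \<Longrightarrow> 0 \<le> weight_inner us"
  by (simp add: weight_inner_def step_weight_nonneg visit_weight_pos less_imp_le)

lemma weight_all_le_weight_inner: "set us \<subseteq> \<Omega> \<Longrightarrow> weight_all us \<le> weight_inner us"
  unfolding weight_all_def weight_inner_def
  by (intro mult_right_mono visit_weight_antimono visits_mono step_weight_nonneg) auto

lemma weight_inner_le_step_weight: "set us \<subseteq> \<Omega> \<Longrightarrow> weight_inner us \<le> step_weight us"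
  unfolding weight_inner_def
  by (rule mult_left_le_one_le[OF step_weight_nonneg less_imp_le[OF visit_weight_pos] visit_weight_le_1])

lemma half_space_weight_all: "half_space_walk us \<Longrightarrow> weight_all us = weight_tail us"
proof -
  assume hs: "half_space_walk us"
  have "0 \<notin># visits us {1..length us}"
    using hs by (auto simp: set_visits half_space_walk_def height_def xcoord_def)
  moreover have "{0..length us} = insert 0 {1..length us}" by auto
  ultimately show ?thesis
    by (simp add: weight_all_def weight_tail_def visits_def visit_weight_add_mset_new)
qed

lemma weight_tail_split:
  assumes "k \<le> length us" "set us \<subseteq> \<Omega>"
  shows "weight_tail us \<le> weight_tail (take k us) * weight_tail (drop k us)"
proof -
  have I: "{1..length us} = {1..k} \<union> plus k ` {1..length us - k}" using assms(1) by auto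
  have "visit_weight (visits us {1..length us})
      \<le> visit_weight (visits us {1..k}) * visit_weight (visits (drop k us) {1..length us - k})"
    unfolding I by (rule visit_weight_split) auto
  also have "visits us {1..k} = visits (take k us) {1..k}" by (simp add: visits_take)
  finally have "weight_tail us \<le> visit_weight (visits (take k us) {1..k})
      * visit_weight (visits (drop k us) {1..length us - k}) * step_weight us"
    unfolding weight_tail_def by (rule mult_right_mono) (rule step_weight_nonneg[OF assms(2)])
  also have "step_weight us = step_weight (take k us) * step_weight (drop k us)"
    by (metis append_take_drop_id step_weight_append)
  finally show ?thesis using assms(1) by (simp add: weight_tail_def min.absorb2 mult_ac)
qed

lemma weight_inner_split:
  assumes "length us = n + m" "set us \<subseteq> \<Omega>"
  shows "weight_inner us \<le> weight_inner (take n us) * weight_inner (drop n us)"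
proof -
  have "visit_weight (visits us {1..<n + m}) \<le> visit_weight (visits us ({1..<n} \<union> plus n ` {1..<m}))"
    by (intro visit_weight_antimono visits_mono) auto
  also have "\<dots> \<le> visit_weight (visits us {1..<n}) * visit_weight (visits (drop n us) {1..<m})"
    by (rule visit_weight_split) auto
  also have "visits us {1..<n} = visits (take n us) {1..<n}" by (rule visits_take[symmetric]) auto
  finally have "weight_inner us \<le> visit_weight (visits (take n us) {1..<n})
      * visit_weight (visits (drop n us) {1..<m}) * step_weight us"
    unfolding weight_inner_def assms(1) by (rule mult_right_mono) (rule step_weight_nonneg[OF assms(2)])
  also have "step_weight us = step_weight (take n us) * step_weight (drop n us)"
    by (metis append_take_drop_id step_weight_append)
  finally show ?thesis using assms(1) by (simp add: weight_inner_def mult_ac)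
qed

lemma weight_tail_map:
  assumes "set us \<subseteq> \<Omega>" "\<And>x y. g (x + y) = g x + g y" "inj g" "\<And>v. v \<in> \<Omega> \<Longrightarrow> \<rho> (g v) = \<rho> v"
  shows "weight_tail (map g us) = weight_tail us"
  using assms by (simp add: weight_tail_def visits_map visit_weight_image step_weight_map)

lemma weight_inner_reverse:
  assumes "set c \<subseteq> \<Omega>"
  shows "weight_inner (u # rev (map uminus c)) = \<rho> u * weight_tail c"
proof -
  let ?a = "u # rev (map uminus c)" and ?k = "length c"
  have I: "(\<lambda>i. Suc (?k - i)) ` {1..?k} = {1..<length ?a}"
  proof
    show "{1..<length ?a} \<subseteq> (\<lambda>i. Suc (?k - i)) ` {1..?k}"
    proof
      fix j assume "j \<in> {1..<length ?a}"
      then show "j \<in> (\<lambda>i. Suc (?k - i)) ` {1..?k}" by (intro image_eqI[of _ _ "Suc ?k - j"]) auto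
    qed
  qed auto
  have "visits ?a ((\<lambda>i. Suc (?k - i)) ` {1..?k})
      = image_mset (\<lambda>p. u + (p - position c ?k)) (visits c {1..?k})"
    by (rule visits_reindex) (auto simp: inj_on_def position_Cons position_rev_uminus)
  then have "visit_weight (visits ?a {1..<length ?a}) = visit_weight (visits c {1..?k})"
    unfolding I by (simp add: visit_weight_image inj_def)
  moreover have "step_weight ?a = \<rho> u * step_weight c"
    using step_weight_map[OF assms uminus_step(2)]
    by (simp add: step_weight_def rev_map[symmetric] prod_list.rev)
  ultimately show ?thesis by (simp add: weight_inner_def weight_tail_def)
qed

lemma weight_inner_snoc: "weight_inner (c @ [v]) = weight_tail c * \<rho> v"
proof -
  have "visits (c @ [v]) {1..length c} = visits c {1..length c}"
    by (rule visits_cong) (simp add: position_append)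
  then show ?thesis
    by (simp add: weight_inner_def weight_tail_def step_weight_append atLeastLessThanSuc_atLeastAtMost)
      (simp add: step_weight_def)
qed

lemma weight_all_append_bridge:
  assumes a: "bridge_walk a" and b: "bridge_walk b"
  shows "weight_all (a @ b) = weight_all a * weight_all b"
proof -
  let ?n = "length a" and ?m = "length b" and ?c = "a @ b"
  let ?shifted = "image_mset (plus (position a ?n)) (visits b {1..?m})"
  have first: "visits ?c {0..?n} = visits a {0..?n}"
    by (rule visits_cong) (simp add: position_append)
  have second: "visits ?c (plus ?n ` {1..?m}) = ?shifted"
    unfolding visits_shift[OF finite_atLeastAtMost] by (simp add: position_append)
  have I: "{0..?n + ?m} = {0..?n} \<union> plus ?n ` {1..?m}" by auto
  have split: "visits ?c {0..?n + ?m} = visits a {0..?n} + ?shifted"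
    unfolding I first[symmetric] second[symmetric] by (rule visits_union) auto
  have "position a i \<noteq> position a ?n + position b j" if "i \<le> ?n" "j \<in> {1..?m}" for i j
  proof
    assume "position a i = position a ?n + position b j"
    then have "height a i = height a ?n + height b j" by (simp add: height_def xcoord_def)
    moreover have "height a i \<le> height a ?n" using a that(1) by (simp add: bridge_walk_def)
    moreover have "0 < height b j" using b that(2) by (simp add: bridge_walk_def half_space_walk_def)
    ultimately show False by simp
  qed
  then have disj: "set_mset (visits a {0..?n}) \<inter> set_mset ?shifted = {}"
    by (auto simp: set_visits)
  have "weight_all ?c = visit_weight (visits a {0..?n}) * visit_weight ?shifted * step_weight ?c"
    unfolding weight_all_def length_append split visit_weight_add_disjoint[OF disj] ..
  also have "\<dots> = weight_all a * weight_tail b"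
    by (simp add: weight_all_def weight_tail_def visit_weight_image inj_def step_weight_append)
  finally show ?thesis using b by (simp add: bridge_walk_def half_space_weight_all)
qed

definition bridge_sum :: "nat \<Rightarrow> real" where
  "bridge_sum n = (\<Sum>us\<in>{us\<in>step_lists n. bridge_walk us}. weight_all us)"

definition walk_sum :: "nat \<Rightarrow> real" where
  "walk_sum n = (\<Sum>us\<in>step_lists n. weight_all us)"

definition inner_sum :: "nat \<Rightarrow> real" where
  "inner_sum n = (\<Sum>us\<in>step_lists n. weight_inner us)"

lemma step_lists_0: "step_lists 0 = {[]}"
  by (auto simp: mem_step_lists)

lemma bridge_sum_0: "bridge_sum 0 = 1"
proof -
  have "{us\<in>step_lists 0. bridge_walk us} = {[]}"
    by (auto simp: step_lists_0 bridge_walk_def half_space_walk_def)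
  then show ?thesis
    by (simp add: bridge_sum_def weight_all_def step_weight_def visits_def visit_weight_def
        phi_1[unfolded One_nat_def])
qed

lemma inner_sum_0: "inner_sum 0 = 1"
  by (simp add: inner_sum_def step_lists_0 weight_inner_def step_weight_def visits_def)

lemma bridge_sum_nonneg: "0 \<le> bridge_sum n"
  unfolding bridge_sum_def by (rule sum_nonneg) (simp add: weight_all_nonneg mem_step_lists)

lemma inner_sum_nonneg: "0 \<le> inner_sum n"
  unfolding inner_sum_def by (rule sum_nonneg) (simp add: weight_inner_nonneg mem_step_lists)

lemma bridge_sum_le_walk_sum: "bridge_sum n \<le> walk_sum n"
  unfolding bridge_sum_def walk_sum_def
  by (rule sum_mono2) (auto simp: finite_step_lists mem_step_lists weight_all_nonneg)

lemma walk_sum_le_inner_sum: "walk_sum n \<le> inner_sum n"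
  unfolding walk_sum_def inner_sum_def
  by (rule sum_mono) (simp add: mem_step_lists weight_all_le_weight_inner)

lemma inner_sum_le_1: "inner_sum n \<le> 1"
  using sum_mono[of "step_lists n" weight_inner step_weight] sum_step_weight[of n]
  by (simp add: inner_sum_def mem_step_lists weight_inner_le_step_weight)

lemma inner_sum_submult: "inner_sum (n + m) \<le> inner_sum n * inner_sum m"
  unfolding inner_sum_def
proof (rule sum_le_sum_mult_sum_inj[where F = "\<lambda>us. (take n us, drop n us)"])
  show "inj_on (\<lambda>us. (take n us, drop n us)) (step_lists (n + m))"
    using inj_on_split[of id id "\<lambda>_. n"] by simp
  show "(\<lambda>us. (take n us, drop n us)) ` step_lists (n + m) \<subseteq> step_lists n \<times> step_lists m"
    by (auto simp: mem_step_lists) (meson in_set_takeD in_set_dropD subsetD)+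
qed (auto simp: mem_step_lists finite_step_lists weight_inner_nonneg intro: weight_inner_split
    dest: in_set_takeD in_set_dropD)

lemma bridge_sum_supermult: "bridge_sum n * bridge_sum m \<le> bridge_sum (n + m)"
proof -
  let ?B = "\<lambda>k. {us\<in>step_lists k. bridge_walk us}"
  let ?cat = "\<lambda>p. fst p @ snd p"
  have "bridge_sum n * bridge_sum m = (\<Sum>p\<in>?B n \<times> ?B m. weight_all (fst p) * weight_all (snd p))"
    by (simp add: bridge_sum_def sum_product sum.cartesian_product case_prod_beta)
  also have "\<dots> = (\<Sum>p\<in>?B n \<times> ?B m. weight_all (?cat p))"
    by (rule sum.cong) (auto simp: weight_all_append_bridge)
  also have "\<dots> = (\<Sum>c\<in>?cat ` (?B n \<times> ?B m). weight_all c)"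
    by (rule sum.reindex[symmetric, unfolded o_def]) (auto simp: inj_on_def mem_step_lists)
  also have "\<dots> \<le> (\<Sum>c\<in>?B (n + m). weight_all c)"
    by (rule sum_mono2) (auto simp: finite_step_lists mem_step_lists bridge_walk_append weight_all_nonneg)
  finally show ?thesis by (simp add: bridge_sum_def)
qed

lemma height_replicate: "height (replicate n u) i = int (min i n) * xcoord u"
proof -
  have "xcoord (sum_list (replicate k u)) = int k * xcoord u" for k
    by (induction k) (simp_all add: xcoord_def algebra_simps)
  then show ?thesis by (simp add: height_def position_def)
qed

lemma bridge_sum_pos: "0 < bridge_sum n"
proof -
  obtain u where u: "u \<in> \<Omega>" "0 < xcoord u" "0 < \<rho> u" using positive_step by blast
  have "replicate n u \<in> {us\<in>step_lists n. bridge_walk us}"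
    using u by (auto simp: mem_step_lists bridge_walk_def half_space_walk_def height_replicate
        min_def mult_right_mono)
  then have "weight_all (replicate n u) \<le> bridge_sum n"
    unfolding bridge_sum_def
    by (rule member_le_sum) (auto simp: finite_step_lists mem_step_lists weight_all_nonneg)
  moreover have "0 < weight_all (replicate n u)"
    using u by (simp add: weight_all_def step_weight_def visit_weight_pos)
  ultimately show ?thesis by simp
qed

lemma bridge_sum_le_1: "bridge_sum n \<le> 1"
  using bridge_sum_le_walk_sum walk_sum_le_inner_sum inner_sum_le_1 order_trans by metis

lemma weight_tail_split_last_max:
  assumes "half_space_walk us" "1 \<le> max_height us" "set us \<subseteq> \<Omega>"
  defines "k \<equiv> last_hit us (int (max_height us))"
  shows "weight_tail us \<le> weight_all (take k us) * weight_tail (map reflect_x (drop k us))"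
proof -
  note split = half_space_split_last_max[OF assms(1,2), folded k_def]
  have "set (drop k us) \<subseteq> \<Omega>" using assms(3) by (auto dest: in_set_dropD)
  then have "weight_tail (map reflect_x (drop k us)) = weight_tail (drop k us)"
    by (rule weight_tail_map) (auto simp: reflect_x_add inj_reflect_x reflect_x_step)
  moreover have "weight_all (take k us) = weight_tail (take k us)"
    using split(2) by (simp add: bridge_walk_def half_space_weight_all)
  ultimately show ?thesis using weight_tail_split[OF split(1) assms(3)] by simp
qed

lemma weight_tail_split_last_min:
  assumes "set c \<subseteq> \<Omega>" "u \<in> \<Omega>" "0 < xcoord u"
  defines "k \<equiv> last_hit c (min_height c)"
  shows "\<rho> u * weight_tail c \<le> weight_inner (u # rev (map uminus (take k c))) * weight_tail (drop k c)"
proof -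
  have kn: "k \<le> length c" unfolding k_def by (rule half_space_split_last_min(1)[OF assms(3)])
  have "set (take k c) \<subseteq> \<Omega>" using assms(1) by (auto dest: in_set_takeD)
  then have "weight_inner (u # rev (map uminus (take k c))) = \<rho> u * weight_tail (take k c)"
    by (rule weight_inner_reverse)
  moreover have "\<rho> u * weight_tail c \<le> \<rho> u * (weight_tail (take k c) * weight_tail (drop k c))"
    by (rule mult_left_mono[OF weight_tail_split[OF kn assms(1)]]) (use assms(2) rho_nonneg in auto)
  ultimately show ?thesis by (simp add: mult_ac)
qed

section \<open>The Hammersley--Welsh bound\<close>

definition half_space_gen :: "real \<Rightarrow> nat \<Rightarrow> nat \<Rightarrow> real" where
  "half_space_gen z M s = (\<Sum>us\<in>{us\<in>step_lists_upto M. half_space_walk us \<and> max_height us \<le> s}.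
     weight_tail us * z ^ length us)"

definition bridge_gen :: "real \<Rightarrow> nat \<Rightarrow> nat \<Rightarrow> real" where
  "bridge_gen z M s = (\<Sum>us\<in>{us\<in>step_lists_upto M. bridge_walk us \<and> max_height us = s}.
     weight_all us * z ^ length us)"

definition bridge_poly :: "real \<Rightarrow> nat \<Rightarrow> real" where
  "bridge_poly z M = (\<Sum>n\<le>M. bridge_sum n * z ^ n)"

lemma bridge_gen_nonneg: "0 \<le> z \<Longrightarrow> 0 \<le> bridge_gen z M s"
  unfolding bridge_gen_def by (rule sum_nonneg) (auto simp: mem_step_lists_upto weight_all_nonneg)

lemma half_space_gen_0: "half_space_gen z M 0 = 1"
proof -
  have "us = []" if "half_space_walk us" "max_height us = 0" for us
  proof (rule ccontr)
    assume "us \<noteq> []"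
    then have len: "1 \<le> length us" by (simp add: Suc_le_eq)
    then have "0 < height us 1" using that(1) by (simp add: half_space_walk_def)
    moreover have "height us 1 \<le> int (max_height us)" using len by (rule height_le_max_height)
    ultimately show False using that(2) by simp
  qed
  moreover have "half_space_walk []" "max_height [] = 0"
    by (simp_all add: half_space_walk_def max_height_def)
  ultimately have "{us\<in>step_lists_upto M. half_space_walk us \<and> max_height us \<le> 0} = {[]}"
    by (auto simp: mem_step_lists_upto)
  then show ?thesis by (simp add: half_space_gen_def weight_tail_def step_weight_def visits_def)
qed

lemma half_space_gen_exact_le:
  assumes z: "0 \<le> z"
  shows "(\<Sum>us\<in>{us\<in>step_lists_upto M. half_space_walk us \<and> max_height us = Suc s}.
      weight_tail us * z ^ length us) \<le> bridge_gen z M (Suc s) * half_space_gen z M s"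
  unfolding bridge_gen_def half_space_gen_def
proof (rule sum_le_sum_mult_sum_inj)
  let ?k = "\<lambda>us. last_hit us (int (max_height us))"
  let ?F = "\<lambda>us. (take (?k us) us, map reflect_x (drop (?k us) us))"
  let ?A = "{us\<in>step_lists_upto M. half_space_walk us \<and> max_height us = Suc s}"
  show "inj_on ?F ?A"
    by (rule inj_on_split[of id, simplified]) (rule inj_mapI[OF inj_reflect_x])
  show "?F ` ?A \<subseteq> {us\<in>step_lists_upto M. bridge_walk us \<and> max_height us = Suc s}
      \<times> {us\<in>step_lists_upto M. half_space_walk us \<and> max_height us \<le> s}"
  proof (rule image_subsetI)
    fix us assume "us \<in> ?A"
    then have us: "half_space_walk us" "1 \<le> max_height us" "max_height us = Suc s"
      "set us \<subseteq> \<Omega>" "length us \<le> M"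
      by (auto simp: mem_step_lists_upto)
    note split = half_space_split_last_max[OF us(1,2)]
    have "set (take (?k us) us) \<subseteq> \<Omega>" "set (map reflect_x (drop (?k us) us)) \<subseteq> \<Omega>"
      using us(4) reflect_x_step(1) by (auto dest: in_set_takeD in_set_dropD)
    moreover have "length (take (?k us) us) \<le> M" "length (map reflect_x (drop (?k us) us)) \<le> M"
      using us(5) by simp_all
    ultimately show "?F us \<in> {us\<in>step_lists_upto M. bridge_walk us \<and> max_height us = Suc s}
      \<times> {us\<in>step_lists_upto M. half_space_walk us \<and> max_height us \<le> s}"
      using split(2-5) us(3) by (simp add: mem_step_lists_upto)
  qed
  fix us assume "us \<in> ?A"
  then have us: "half_space_walk us" "1 \<le> max_height us" "set us \<subseteq> \<Omega>"
    by (auto simp: mem_step_lists_upto)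
  have len: "length us = length (take (?k us) us) + length (map reflect_x (drop (?k us) us))"
    using half_space_split_last_max(1)[OF us(1,2)] by simp
  have "weight_tail us * z ^ length us
      \<le> weight_all (take (?k us) us) * weight_tail (map reflect_x (drop (?k us) us)) * z ^ length us"
    by (rule mult_right_mono[OF weight_tail_split_last_max[OF us] zero_le_power[OF z]])
  then show "weight_tail us * z ^ length us
      \<le> weight_all (fst (?F us)) * z ^ length (fst (?F us))
        * (weight_tail (snd (?F us)) * z ^ length (snd (?F us)))"
    unfolding fst_conv snd_conv by (subst (asm) (2) len) (simp only: power_add mult_ac)
qed (auto simp: mem_step_lists_upto weight_all_nonneg weight_tail_nonneg z)

lemma half_space_gen_Suc:
  "0 \<le> z \<Longrightarrow> half_space_gen z M (Suc s) \<le> (1 + bridge_gen z M (Suc s)) * half_space_gen z M s"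
proof -
  assume z: "0 \<le> z"
  let ?h = "\<lambda>us. weight_tail us * z ^ length us"
  let ?hs = "\<lambda>P. {us\<in>step_lists_upto M. half_space_walk us \<and> P (max_height us)}"
  have "?hs (\<lambda>h. h \<le> Suc s) = ?hs (\<lambda>h. h \<le> s) \<union> ?hs (\<lambda>h. h = Suc s)" by auto
  then have "half_space_gen z M (Suc s) = half_space_gen z M s + sum ?h (?hs (\<lambda>h. h = Suc s))"
    unfolding half_space_gen_def by (simp only:) (rule sum.union_disjoint, auto)
  then show ?thesis using half_space_gen_exact_le[OF z, of M s] by (simp add: algebra_simps)
qed

lemma half_space_gen_le_prod:
  "0 \<le> z \<Longrightarrow> half_space_gen z M s \<le> (\<Prod>j\<in>{1..s}. 1 + bridge_gen z M j)"
proof (induction s)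
  case 0 then show ?case by (simp add: half_space_gen_0)
next
  case (Suc s)
  have "half_space_gen z M (Suc s) \<le> (1 + bridge_gen z M (Suc s)) * half_space_gen z M s"
    by (rule half_space_gen_Suc[OF Suc.prems])
  also have "\<dots> \<le> (1 + bridge_gen z M (Suc s)) * (\<Prod>j\<in>{1..s}. 1 + bridge_gen z M j)"
    by (rule mult_left_mono[OF Suc.IH[OF Suc.prems]])
      (use bridge_gen_nonneg[OF Suc.prems] in \<open>simp add: add_nonneg_nonneg\<close>)
  finally show ?case by (simp add: prod.cl_ivl_Suc mult.commute)
qed

lemma sum_step_lists_upto_by_length:
  fixes w :: "pt list \<Rightarrow> real" and z :: real
  shows "(\<Sum>us\<in>{us\<in>step_lists_upto M. P us}. w us * z ^ length us)
    = (\<Sum>n\<le>M. (\<Sum>us\<in>{us\<in>step_lists n. P us}. w us) * z ^ n)"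
proof -
  let ?S = "{us\<in>step_lists_upto M. P us}"
  have "(\<Sum>n\<le>M. (\<Sum>us\<in>{us\<in>step_lists n. P us}. w us) * z ^ n)
      = (\<Sum>n\<le>M. \<Sum>us\<in>{us\<in>?S. length us = n}. w us * z ^ length us)"
  proof (rule sum.cong)
    fix n assume "n \<in> {..M}"
    then have e: "{us\<in>?S. length us = n} = {us\<in>step_lists n. P us}"
      by (auto simp: mem_step_lists_upto mem_step_lists)
    show "(\<Sum>us\<in>{us\<in>step_lists n. P us}. w us) * z ^ n
        = (\<Sum>us\<in>{us\<in>?S. length us = n}. w us * z ^ length us)"
      unfolding e by (subst sum_distrib_right) (rule sum.cong, auto simp: mem_step_lists)
  qed simp
  also have "\<dots> = (\<Sum>us\<in>?S. w us * z ^ length us)"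
    by (rule sum.group) (auto simp: mem_step_lists_upto)
  finally show ?thesis by simp
qed

lemma half_space_gen_le_exp:
  assumes z: "0 \<le> z"
  shows "(\<Sum>us\<in>{us\<in>step_lists_upto M. half_space_walk us}. weight_tail us * z ^ length us)
    \<le> exp (bridge_poly z M)"
proof -
  define S where "S = Max (max_height ` {us\<in>step_lists_upto M. half_space_walk us})"
  have "{us\<in>step_lists_upto M. half_space_walk us}
      = {us\<in>step_lists_upto M. half_space_walk us \<and> max_height us \<le> S}"
    unfolding S_def by (auto intro: Max_ge)
  then have "(\<Sum>us\<in>{us\<in>step_lists_upto M. half_space_walk us}. weight_tail us * z ^ length us)
      = half_space_gen z M S"
    by (simp add: half_space_gen_def)
  also have "\<dots> \<le> (\<Prod>j\<in>{1..S}. 1 + bridge_gen z M j)" by (rule half_space_gen_le_prod[OF z])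
  also have "\<dots> \<le> (\<Prod>j\<in>{1..S}. exp (bridge_gen z M j))"
    by (rule prod_mono) (use bridge_gen_nonneg[OF z] in \<open>auto simp: add.commute add_nonneg_nonneg\<close>)
  also have "\<dots> = exp (\<Sum>j\<in>{1..S}. bridge_gen z M j)" by (simp add: exp_sum)
  also have "(\<Sum>j\<in>{1..S}. bridge_gen z M j) \<le> bridge_poly z M"
  proof -
    let ?B = "{us\<in>step_lists_upto M. bridge_walk us \<and> max_height us \<in> {1..S}}"
    let ?h = "\<lambda>us. weight_all us * z ^ length us"
    have "(\<Sum>j\<in>{1..S}. bridge_gen z M j) = (\<Sum>j\<in>{1..S}. sum ?h {us\<in>?B. max_height us = j})"
      unfolding bridge_gen_def by (rule sum.cong) (auto intro!: sum.cong)
    also have "\<dots> = sum ?h ?B" by (rule sum.group) auto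
    also have "\<dots> \<le> sum ?h {us\<in>step_lists_upto M. bridge_walk us}"
      by (rule sum_mono2) (auto simp: mem_step_lists_upto weight_all_nonneg z)
    also have "\<dots> = bridge_poly z M"
      by (simp add: sum_step_lists_upto_by_length bridge_poly_def bridge_sum_def)
    finally show ?thesis .
  qed
  then have "exp (\<Sum>j\<in>{1..S}. bridge_gen z M j) \<le> exp (bridge_poly z M)" by simp
  finally show ?thesis .
qed

lemma inner_gen_le_tail_gen:
  assumes z: "0 \<le> z" and P: "\<And>us. P us \<Longrightarrow> P (butlast us)"
  shows "(\<Sum>a\<in>{a\<in>step_lists_upto M. P a}. weight_inner a * z ^ length a)
    \<le> 1 + z * (\<Sum>c\<in>{c\<in>step_lists_upto M. P c}. weight_tail c * z ^ length c)"
proof -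
  let ?A = "{a\<in>step_lists_upto M. P a}"
  let ?h = "\<lambda>a. weight_inner a * z ^ length a"
  have "sum ?h ?A = sum ?h ((?A \<inter> {[]}) \<union> (?A - {[]}))" by (simp only: Int_Diff_Un)
  also have "\<dots> = sum ?h (?A \<inter> {[]}) + sum ?h (?A - {[]})"
    by (rule sum.union_disjoint) auto
  also have "sum ?h (?A \<inter> {[]}) \<le> 1"
  proof -
    have "sum ?h (?A \<inter> {[]}) \<le> sum ?h {[]}"
      by (rule sum_mono2) (auto simp: weight_inner_def step_weight_def visits_def)
    then show ?thesis by (simp add: weight_inner_def step_weight_def visits_def)
  qed
  also have "sum ?h (?A - {[]})
      \<le> (\<Sum>c\<in>?A. weight_tail c * z ^ length c) * (\<Sum>v\<in>\<Omega>. z * \<rho> v)"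
  proof (rule sum_le_sum_mult_sum_inj[where F = "\<lambda>a. (butlast a, last a)"])
    show "inj_on (\<lambda>a. (butlast a, last a)) (?A - {[]})"
      by (rule inj_onI) (metis Diff_iff append_butlast_last_id prod.inject singletonI)
    show "(\<lambda>a. (butlast a, last a)) ` (?A - {[]}) \<subseteq> ?A \<times> \<Omega>"
      using P by (auto simp: mem_step_lists_upto dest: in_set_butlastD)
    fix a assume "a \<in> ?A - {[]}"
    then have "a \<noteq> []" by simp
    then have "weight_inner a = weight_tail (butlast a) * \<rho> (last a)"
      and "length a = Suc (length (butlast a))"
      using weight_inner_snoc[of "butlast a" "last a"] by simp_all
    then have "?h a = weight_tail (butlast a) * z ^ length (butlast a) * (z * \<rho> (last a))"
      by (simp only: power_Suc mult_ac)
    then show "?h a \<le> weight_tail (fst (butlast a, last a)) * z ^ length (fst (butlast a, last a))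
        * (z * \<rho> (snd (butlast a, last a)))" by simp
  qed (auto simp: finite_steps mem_step_lists_upto weight_tail_nonneg z rho_nonneg)
  also have "(\<Sum>v\<in>\<Omega>. z * \<rho> v) = z" by (simp add: sum_distrib_left[symmetric] rho_sum)
  finally show ?thesis by (simp add: mult_ac)
qed

lemma tail_gen_le:
  assumes z: "0 < z" and u: "u \<in> \<Omega>" "0 < xcoord u"
  shows "\<rho> u * z * (\<Sum>c\<in>step_lists_upto N. weight_tail c * z ^ length c)
    \<le> (\<Sum>a\<in>{a\<in>step_lists_upto (Suc N). half_space_walk a}. weight_inner a * z ^ length a)
      * (\<Sum>b\<in>{b\<in>step_lists_upto N. half_space_walk b}. weight_tail b * z ^ length b)"
  unfolding sum_distrib_left[of "\<rho> u * z"]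
proof (rule sum_le_sum_mult_sum_inj)
  let ?k = "\<lambda>c. last_hit c (min_height c)"
  let ?F = "\<lambda>c. (u # rev (map uminus (take (?k c) c)), drop (?k c) c)"
  show "inj_on ?F (step_lists_upto N)"
    by (rule inj_on_split[where g = id, simplified]) (rule inj_Cons_rev_map_uminus)
  show "?F ` step_lists_upto N \<subseteq> {a\<in>step_lists_upto (Suc N). half_space_walk a}
      \<times> {b\<in>step_lists_upto N. half_space_walk b}"
  proof (rule image_subsetI)
    fix c assume "c \<in> step_lists_upto N"
    then have c: "set c \<subseteq> \<Omega>" "length c \<le> N" by (auto simp: mem_step_lists_upto)
    note split = half_space_split_last_min[OF u(2), of c]
    have "set (u # rev (map uminus (take (?k c) c))) \<subseteq> \<Omega>" "set (drop (?k c) c) \<subseteq> \<Omega>"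
      using c(1) u(1) uminus_step(1) by (auto dest: in_set_takeD in_set_dropD)
    moreover have "length (u # rev (map uminus (take (?k c) c))) \<le> Suc N" "length (drop (?k c) c) \<le> N"
      using c(2) by simp_all
    ultimately show "?F c \<in> {a\<in>step_lists_upto (Suc N). half_space_walk a}
      \<times> {b\<in>step_lists_upto N. half_space_walk b}"
      using split(2,3) by (simp add: mem_step_lists_upto)
  qed
  fix c assume "c \<in> step_lists_upto N"
  then have c: "set c \<subseteq> \<Omega>" by (simp add: mem_step_lists_upto)
  have len: "Suc (length c) = length (u # rev (map uminus (take (?k c) c))) + length (drop (?k c) c)"
    using half_space_split_last_min(1)[OF u(2), of c] by simp
  have "\<rho> u * weight_tail c * z ^ Suc (length c)
      \<le> weight_inner (u # rev (map uminus (take (?k c) c))) * weight_tail (drop (?k c) c)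
        * z ^ Suc (length c)"
    by (rule mult_right_mono[OF weight_tail_split_last_min[OF c u] zero_le_power]) (use z in simp)
  then show "\<rho> u * z * (weight_tail c * z ^ length c)
      \<le> weight_inner (fst (?F c)) * z ^ length (fst (?F c))
        * (weight_tail (snd (?F c)) * z ^ length (snd (?F c)))"
    unfolding fst_conv snd_conv by (subst (asm) (2) len) (simp only: power_add power_Suc mult_ac)
qed (use z in \<open>auto simp: mem_step_lists_upto weight_inner_nonneg weight_tail_nonneg\<close>)

lemma sum_inner_sum_le:
  assumes z: "0 < z" and u: "u \<in> \<Omega>" "0 < xcoord u" "0 < \<rho> u"
    and G: "\<And>M. bridge_poly z M \<le> G"
  shows "(\<Sum>n\<le>N. inner_sum n * z ^ n) \<le> 1 + (1 + z * exp G) * exp G / \<rho> u"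
proof -
  let ?half = "\<lambda>M. \<Sum>b\<in>{b\<in>step_lists_upto M. half_space_walk b}. weight_tail b * z ^ length b"
  let ?tail = "\<Sum>c\<in>step_lists_upto N. weight_tail c * z ^ length c"
  let ?inner = "\<Sum>a\<in>{a\<in>step_lists_upto (Suc N). half_space_walk a}. weight_inner a * z ^ length a"
  have half_le: "?half M \<le> exp G" for M
  proof -
    have "?half M \<le> exp (bridge_poly z M)" using z by (intro half_space_gen_le_exp) simp
    also have "\<dots> \<le> exp G" using G[of M] by simp
    finally show ?thesis .
  qed
  have half_nonneg: "0 \<le> ?half N"
    by (rule sum_nonneg) (use z in \<open>auto simp: mem_step_lists_upto weight_tail_nonneg\<close>)
  have "?inner \<le> 1 + z * ?half (Suc N)"
    using z by (intro inner_gen_le_tail_gen half_space_walk_butlast) simp_all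
  also have "\<dots> \<le> 1 + z * exp G" using half_le[of "Suc N"] z by simp
  finally have inner_le: "?inner \<le> 1 + z * exp G" .
  have "\<rho> u * (z * ?tail) = \<rho> u * z * ?tail" by simp
  also have "\<dots> \<le> ?inner * ?half N" by (rule tail_gen_le[OF z u(1,2)])
  also have "\<dots> \<le> (1 + z * exp G) * exp G"
    by (rule mult_mono[OF inner_le half_le _ half_nonneg]) (use z in simp)
  finally have tail_le: "z * ?tail \<le> (1 + z * exp G) * exp G / \<rho> u"
    using u(3) by (simp add: pos_le_divide_eq mult.commute)
  have "(\<Sum>n\<le>N. inner_sum n * z ^ n) = (\<Sum>a\<in>step_lists_upto N. weight_inner a * z ^ length a)"
    using sum_step_lists_upto_by_length[of weight_inner z N "\<lambda>_. True"] by (simp add: inner_sum_def)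
  also have "\<dots> \<le> 1 + z * ?tail"
    using inner_gen_le_tail_gen[of z "\<lambda>_. True" N] z by simp
  also have "\<dots> \<le> 1 + (1 + z * exp G) * exp G / \<rho> u" using tail_le by simp
  finally show ?thesis .
qed

lemma summable_inner_sum:
  assumes z: "0 < z" and bridges: "summable (\<lambda>n. bridge_sum n * z ^ n)"
  shows "summable (\<lambda>n. inner_sum n * z ^ n)"
proof -
  obtain u where u: "u \<in> \<Omega>" "0 < xcoord u" "0 < \<rho> u" using positive_step by blast
  have "bridge_poly z M \<le> (\<Sum>n. bridge_sum n * z ^ n)" for M
    unfolding bridge_poly_def by (rule sum_le_suminf[OF bridges]) (use z bridge_sum_nonneg in auto)
  then have "\<And>N. (\<Sum>n\<le>N. inner_sum n * z ^ n) \<le> 1 + (1 + z * exp (\<Sum>n. bridge_sum n * z ^ n))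
      * exp (\<Sum>n. bridge_sum n * z ^ n) / \<rho> u"
    by (rule sum_inner_sum_le[OF z u])
  then show ?thesis
    by (rule bounded_imp_summable[rotated]) (use z inner_sum_nonneg in simp)
qed

section \<open>Walks and bridges\<close>

lemma weight_walk_of_steps: "weight \<phi> \<rho> (walk_of_steps us) = weight_all us"
proof -
  let ?n = "length us"
  have set: "set (walk_of_steps us) = set_mset (visits us {0..?n})"
    by (simp add: walk_of_steps_def set_visits atLeastLessThanSuc_atLeastAtMost del: upt_Suc)
  have local_time: "local_time (walk_of_steps us) v = count (visits us {0..?n}) v" for v
  proof -
    have "{k. k < length (walk_of_steps us) \<and> walk_of_steps us ! k = v} = {k\<in>{0..?n}. position us k = v}"
      by (auto simp: nth_walk_of_steps less_Suc_eq_le)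
    then show ?thesis by (simp add: local_time_def visits_def count_image_mset_eq_card_vimage)
  qed
  have "(\<Prod>i\<in>{1..<length (walk_of_steps us)}. \<rho> (walk_of_steps us ! i - walk_of_steps us ! (i - 1)))
      = (\<Prod>i\<in>{0..<?n}. \<rho> (walk_of_steps us ! Suc i - walk_of_steps us ! i))"
    unfolding length_walk_of_steps One_nat_def prod.shift_bounds_Suc_ivl by simp
  also have "\<dots> = step_weight us"
    by (simp add: walk_of_steps_step step_weight_def prod.list_conv_set_nth atLeast0LessThan)
  finally show ?thesis
    unfolding weight_def weight_all_def visit_weight_def set local_time by simp
qed

lemma walks_eq: "walks \<Omega> n = walk_of_steps ` step_lists n"
proof
  show "walk_of_steps ` step_lists n \<subseteq> walks \<Omega> n"
  proof (rule image_subsetI)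
    fix us assume us: "us \<in> step_lists n"
    have "walk_of_steps us ! i - walk_of_steps us ! (i - 1) \<in> \<Omega>" if "i \<in> {1..n}" for i
      using that us walk_of_steps_step[of "i - 1" us] by (auto simp: mem_step_lists)
    then show "walk_of_steps us \<in> walks \<Omega> n"
      using us by (auto simp: walks_def mem_step_lists nth_walk_of_steps)
  qed
  show "walks \<Omega> n \<subseteq> walk_of_steps ` step_lists n"
  proof
    fix g assume g: "g \<in> walks \<Omega> n"
    define us where "us = map (\<lambda>i. g ! Suc i - g ! i) [0..<n]"
    have len: "length us = n" by (simp add: us_def)
    have "g ! Suc i - g ! i \<in> \<Omega>" if "i < n" for i
    proof -
      have "Suc i \<in> {1..n}" using that by simp
      then show ?thesis using g unfolding walks_def by fastforce
    qed
    then have "us \<in> step_lists n" by (auto simp: us_def mem_step_lists)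
    moreover have "position us i = g ! i" if "i \<le> n" for i
      using that
    proof (induction i)
      case 0 then show ?case using g by (simp add: walks_def)
    next
      case (Suc i) then show ?case by (simp add: position_Suc len us_def)
    qed
    then have "walk_of_steps us = g"
      using g len by (intro nth_equalityI) (auto simp: walks_def nth_walk_of_steps)
    ultimately show "g \<in> walk_of_steps ` step_lists n" by auto
  qed
qed

lemma Zpart_eq_walk_sum: "Zpart \<Omega> \<phi> \<rho> n = walk_sum n"
  unfolding Zpart_def walks_eq walk_sum_def
  by (subst sum.reindex) (auto intro: inj_on_subset[OF inj_walk_of_steps] simp: weight_walk_of_steps)

lemma Hbridge_eq_bridge_sum: "Hbridge \<Omega> \<phi> \<rho> n = bridge_sum n"
proof (cases "n = 0")
  case True then show ?thesis by (simp add: Hbridge_def bridge_sum_0)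
next
  case False
  have "{g\<in>walks \<Omega> n. is_bridge g} = walk_of_steps ` {us\<in>step_lists n. bridge_walk us}"
    by (auto simp: walks_eq is_bridge_walk_of_steps)
  then show ?thesis
    using False unfolding Hbridge_def bridge_sum_def
    by (simp add: sum.reindex inj_on_subset[OF inj_walk_of_steps] weight_walk_of_steps)
qed

section \<open>Growth rates\<close>

definition bridge_rate :: real where
  "bridge_rate = (SUP n\<in>{1..}. ln (bridge_sum n) / real n)"

lemma ln_bridge_sum_superadditive: "ln (bridge_sum n) + ln (bridge_sum m) \<le> ln (bridge_sum (n + m))"
proof -
  have "ln (bridge_sum n) + ln (bridge_sum m) = ln (bridge_sum n * bridge_sum m)"
    using bridge_sum_pos[of n] bridge_sum_pos[of m] by (simp add: ln_mult)
  also have "\<dots> \<le> ln (bridge_sum (n + m))"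
    using bridge_sum_supermult bridge_sum_pos by (simp add: mult_pos_pos)
  finally show ?thesis .
qed

lemma ln_bridge_sum_nonpos: "ln (bridge_sum n) \<le> 0"
  using bridge_sum_le_1[of n] bridge_sum_pos[of n] by simp

lemma bridge_rate_limit: "(\<lambda>n. ln (bridge_sum n) / real n) \<longlonglongrightarrow> bridge_rate"
  unfolding bridge_rate_def
  by (rule fekete_superadditive(1)) (simp_all add: ln_bridge_sum_superadditive ln_bridge_sum_nonpos bridge_sum_0)

lemma ln_bridge_sum_le_rate: "1 \<le> n \<Longrightarrow> ln (bridge_sum n) / real n \<le> bridge_rate"
  unfolding bridge_rate_def
  by (rule fekete_superadditive(2)) (simp_all add: ln_bridge_sum_superadditive ln_bridge_sum_nonpos bridge_sum_0)

lemma bridge_sum_le_exp: "bridge_sum n \<le> exp (bridge_rate * real n)"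
proof (cases "n = 0")
  case True then show ?thesis by (simp add: bridge_sum_0)
next
  case False
  then have "ln (bridge_sum n) \<le> bridge_rate * real n"
    using ln_bridge_sum_le_rate[of n] by (simp add: divide_le_eq)
  then show ?thesis using bridge_sum_pos[of n] by (metis exp_le_cancel_iff exp_ln)
qed

lemma inner_sum_pos: "0 < inner_sum n"
  using bridge_sum_pos[of n] bridge_sum_le_walk_sum[of n] walk_sum_le_inner_sum[of n] by simp

lemma inner_sum_mult_le_power: "inner_sum (k * n) \<le> inner_sum n ^ k"
proof (induction k)
  case (Suc k)
  have "inner_sum (Suc k * n) \<le> inner_sum n * inner_sum (k * n)"
    using inner_sum_submult[of n "k * n"] by simp
  also have "\<dots> \<le> inner_sum n * inner_sum n ^ k" by (rule mult_left_mono[OF Suc inner_sum_nonneg])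
  finally show ?case by simp
qed (simp add: inner_sum_0)

text \<open>By submultiplicativity \<open>bridge_sum (k * n) \<le> inner_sum n ^ k\<close>; now let \<open>k \<rightarrow> \<infinity>\<close>.\<close>

lemma exp_bridge_rate_le_inner_sum:
  assumes n: "1 \<le> n"
  shows "exp (bridge_rate * real n) \<le> inner_sum n"
proof -
  have "ln (bridge_sum (Suc k * n)) / real (Suc k * n) \<le> ln (inner_sum n) / real n" for k
  proof -
    have "bridge_sum (Suc k * n) \<le> inner_sum n ^ Suc k"
      using bridge_sum_le_walk_sum walk_sum_le_inner_sum inner_sum_mult_le_power order_trans by metis
    then have "ln (bridge_sum (Suc k * n)) \<le> real (Suc k) * ln (inner_sum n)"
      using bridge_sum_pos inner_sum_pos by (metis ln_le_cancel_iff ln_realpow zero_less_power)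
    then have "ln (bridge_sum (Suc k * n)) / real (Suc k * n)
        \<le> real (Suc k) * ln (inner_sum n) / (real (Suc k) * real n)"
      by (simp only: of_nat_mult) (rule divide_right_mono, simp_all)
    then show ?thesis by (simp del: of_nat_Suc)
  qed
  moreover have "(\<lambda>k. ln (bridge_sum (Suc k * n)) / real (Suc k * n)) \<longlonglongrightarrow> bridge_rate"
    using LIMSEQ_subseq_LIMSEQ[OF bridge_rate_limit, of "\<lambda>k. Suc k * n"] n
    by (simp add: strict_mono_def o_def)
  ultimately have "bridge_rate \<le> ln (inner_sum n) / real n"
    by (intro LIMSEQ_le_const2) auto
  then have "bridge_rate * real n \<le> ln (inner_sum n)" using n by (simp add: le_divide_eq)
  then show ?thesis using inner_sum_pos[of n] by (metis exp_le_cancel_iff exp_ln)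
qed

lemma summable_bridge_gen:
  assumes "0 \<le> z" "z * exp bridge_rate < 1"
  shows "summable (\<lambda>n. bridge_sum n * z ^ n)"
proof (rule summable_comparison_test')
  show "summable (\<lambda>n. (z * exp bridge_rate) ^ n)" using assms by (intro summable_geometric) simp
  fix n
  have "bridge_sum n * z ^ n \<le> exp (bridge_rate * real n) * z ^ n"
    by (rule mult_right_mono[OF bridge_sum_le_exp zero_le_power[OF assms(1)]])
  then show "norm (bridge_sum n * z ^ n) \<le> (z * exp bridge_rate) ^ n"
    using assms(1) bridge_sum_nonneg[of n]
    by (simp add: power_mult_distrib exp_of_nat_mult[symmetric] mult.commute)
qed

lemma walk_sum_rate: "(\<lambda>n. ln (walk_sum n) / real n) \<longlonglongrightarrow> bridge_rate"
proof (rule order_tendstoI)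
  fix a assume "a < bridge_rate"
  with bridge_rate_limit have "\<forall>\<^sub>F n in sequentially. a < ln (bridge_sum n) / real n"
    by (rule order_tendstoD)
  then show "\<forall>\<^sub>F n in sequentially. a < ln (walk_sum n) / real n"
  proof (rule eventually_mono)
    fix n assume "a < ln (bridge_sum n) / real n"
    moreover have "ln (bridge_sum n) \<le> ln (walk_sum n)"
      using bridge_sum_le_walk_sum[of n] bridge_sum_pos[of n] by simp
    then have "ln (bridge_sum n) / real n \<le> ln (walk_sum n) / real n"
      by (rule divide_right_mono) simp
    ultimately show "a < ln (walk_sum n) / real n" by simp
  qed
next
  fix b assume b: "bridge_rate < b"
  define c where "c = (bridge_rate + b) / 2"
  have c: "bridge_rate < c" "c < b" using b by (simp_all add: c_def)
  define z where "z = exp (- c)"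
  have z: "0 < z" "z * exp bridge_rate < 1" using c by (simp_all add: z_def exp_add[symmetric])
  then have "summable (\<lambda>n. inner_sum n * z ^ n)"
    by (intro summable_inner_sum summable_bridge_gen) simp_all
  then have "\<forall>\<^sub>F n in sequentially. inner_sum n * z ^ n < 1"
    by (rule order_tendstoD(2)[OF summable_LIMSEQ_zero]) simp
  then show "\<forall>\<^sub>F n in sequentially. ln (walk_sum n) / real n < b"
    using eventually_ge_at_top[of 1]
  proof eventually_elim
    case (elim n)
    have pos: "0 < walk_sum n" using bridge_sum_pos[of n] bridge_sum_le_walk_sum[of n] by simp
    have "walk_sum n * z ^ n \<le> inner_sum n * z ^ n"
      using z(1) by (intro mult_right_mono walk_sum_le_inner_sum) simp
    then have "walk_sum n * z ^ n < 1" using elim(1) by simp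
    then have "ln (walk_sum n * z ^ n) < 0" using pos z(1) by simp
    then have "ln (walk_sum n) + real n * ln z < 0" using pos z(1) by (simp add: ln_mult ln_realpow)
    then have "ln (walk_sum n) < c * real n" by (simp add: z_def mult.commute)
    then have "ln (walk_sum n) / real n < c" using elim(2) by (simp add: divide_less_eq)
    then show ?case using c(2) by simp
  qed
qed

lemma lambda0_eq_bridge_rate: "lambda0 \<Omega> \<phi> \<rho> = bridge_rate"
  unfolding lambda0_def Zpart_eq_walk_sum using walk_sum_rate by (rule limI)

lemma not_summable_bridge_gen_at_rate: "\<not> summable (\<lambda>n. bridge_sum n * exp (- bridge_rate) ^ n)"
proof
  assume "summable (\<lambda>n. bridge_sum n * exp (- bridge_rate) ^ n)"
  then have "summable (\<lambda>n. inner_sum n * exp (- bridge_rate) ^ n)"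
    by (rule summable_inner_sum[rotated]) simp
  then have small: "\<forall>\<^sub>F n in sequentially. inner_sum n * exp (- bridge_rate) ^ n < 1"
    by (rule order_tendstoD(2)[OF summable_LIMSEQ_zero]) simp
  have large: "1 \<le> inner_sum n * exp (- bridge_rate) ^ n" if "1 \<le> n" for n
    using mult_right_mono[OF exp_bridge_rate_le_inner_sum[OF that], of "exp (- bridge_rate) ^ n"]
    by (simp add: exp_of_nat_mult[symmetric] exp_add[symmetric])
  from small eventually_ge_at_top[of 1] have "\<forall>\<^sub>F n in sequentially. False"
  proof eventually_elim
    case (elim n) then show False using large[of n] by simp
  qed
  then show False by simp
qed

end

theorem corollary5:
  fixes d :: nat and \<Omega> :: "pt set" and \<phi> :: "nat \<Rightarrow> real" and \<rho> :: "pt \<Rightarrow> real"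
  assumes "finite \<Omega>" and "\<Omega> \<subseteq> Zd d - {0}"
    and "\<forall>g\<in>lattice_syms d. g ` \<Omega> \<subseteq> \<Omega>"
    and "\<forall>a. \<phi> a \<ge> 0" and "\<phi> 0 = 0" and "\<phi> 1 = 0"
    and "\<forall>a b. \<phi> (a + b) \<ge> \<phi> a + \<phi> b"
    and "\<forall>v\<in>\<Omega>. \<rho> v \<ge> 0" and "(\<Sum>v\<in>\<Omega>. \<rho> v) = 1"
    and "\<forall>g\<in>lattice_syms d. \<forall>v\<in>\<Omega>. \<rho> (g v) = \<rho> v"
  shows "(\<forall>lam>lambda0 \<Omega> \<phi> \<rho>. summable (\<lambda>n. Hbridge \<Omega> \<phi> \<rho> n * exp (- lam * real n)))
       \<and> \<not> summable (\<lambda>n. Hbridge \<Omega> \<phi> \<rho> n * exp (- lambda0 \<Omega> \<phi> \<rho> * real n))"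
proof -
  interpret weighted_walks \<phi> d \<Omega> \<rho> by unfold_locales (use assms in auto)
  have exp_power: "exp (- lam * real n) = exp (- lam) ^ n" for lam n
    by (simp add: exp_of_nat_mult[symmetric] mult.commute)
  have "summable (\<lambda>n. bridge_sum n * exp (- lam) ^ n)" if "bridge_rate < lam" for lam
    using that by (intro summable_bridge_gen) (simp_all add: exp_add[symmetric])
  then show ?thesis
    unfolding lambda0_eq_bridge_rate Hbridge_eq_bridge_sum exp_power
    using not_summable_bridge_gen_at_rate by blast
qed

end
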